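(* Let $X\subseteq\mathbb{R}^n$ be an $\ell_1$-convex set and $\lambda>0$. Then the set \[ X_\lambda=\bigcup\{\lambda(h+Q_n): h\in\mathbf{H}^n,\ \lambda(h+Q_n)\cap X\neq\emptyset\} \] is $\ell_1$-convex.
   Context: $Q_n=[-\tfrac12,\tfrac12]^n$ and $\mathbf{H}=\{m+\tfrac12: m\in\mathbb{Z}\}$ is the set of half-integers. A subset $Z\subseteq\mathbb{R}^n$ is $\ell_1$-convex if for all $z,z'\in Z$, with $D=\sum_i|z_i-z'_i|$, there is $\gamma\colon[0,D]\to Z$ with $\gamma(0)=z,\gamma(D)=z'$ and $\sum_i|\gamma_i(t)-\gamma_i(t')|=|t-t'|$ for all $t,t'$. *)

theory Defs
  imports "HOL-Analysis.Analysis"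
begin

definition l1dist :: "real^'n \<Rightarrow> real^'n \<Rightarrow> real" where
  "l1dist x y = (\<Sum>i\<in>UNIV. \<bar>x $ i - y $ i\<bar>)"

definition l1_convex :: "(real^'n) set \<Rightarrow> bool" where
  "l1_convex Z \<longleftrightarrow> (\<forall>z\<in>Z. \<forall>z'\<in>Z. \<exists>\<gamma> :: real \<Rightarrow> real^'n.
      \<gamma> 0 = z \<and> \<gamma> (l1dist z z') = z' \<and>
      (\<forall>t\<in>{0..l1dist z z'}. \<gamma> t \<in> Z) \<and>
      (\<forall>t\<in>{0..l1dist z z'}. \<forall>t'\<in>{0..l1dist z z'}. l1dist (\<gamma> t) (\<gamma> t') = \<bar>t - t'\<bar>))"

definition half_integers :: "real set" where
  "half_integers = {of_int m + 1/2 | m. True}"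

definition unit_cube :: "(real^'n) set" where
  "unit_cube = {q. \<forall>i. -1/2 \<le> q $ i \<and> q $ i \<le> 1/2}"

definition scaled_cube :: "real \<Rightarrow> real^'n \<Rightarrow> (real^'n) set" where
  "scaled_cube c h = (\<lambda>q. c *\<^sub>R (h + q)) ` unit_cube"

definition cube_thickening :: "real \<Rightarrow> (real^'n) set \<Rightarrow> (real^'n) set" where
  "cube_thickening lam X = \<Union>{scaled_cube lam h | h. (\<forall>i. h $ i \<in> half_integers) \<and> scaled_cube lam h \<inter> X \<noteq> {}}"

end

theory Submission
  imports Defs
begin

text \<open>
  \<open>X\<^sub>\<lambda>\<close> is the union of the cells of the grid \<open>\<lambda>\<int>\<^sup>n\<close> that meet \<open>X\<close>.
  Let \<open>z, z'\<close> lie in cells \<open>C, C'\<close> of \<open>X\<^sub>\<lambda>\<close> that meet \<open>X\<close> in points \<open>x, x'\<close>, and let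
  \<open>\<gamma>\<close> be an \<open>\<ell>\<^sub>1\<close>-geodesic from \<open>x\<close> to \<open>x'\<close> in \<open>X\<close>. Push \<open>\<gamma>\<close> through a coordinatewise
  monotone, 1-Lipschitz map \<open>F\<close> which sends every point of the box spanned by \<open>x, x'\<close> into a
  grid cell containing that point, sends \<open>x\<close> into \<open>C\<close> and \<open>x'\<close> into \<open>C'\<close>, and orders
  \<open>z, F x, F x', z'\<close> monotonically in every coordinate. Then \<open>F \<circ> \<gamma>\<close> stays in \<open>X\<^sub>\<lambda>\<close> and is
  coordinatewise monotone, so reparametrised by arc length it is a geodesic from \<open>F x\<close> to
  \<open>F x'\<close>. Prefixing the segment from \<open>z\<close> to \<open>F x\<close> (inside the convex cell \<open>C\<close>) and appending
  the segment from \<open>F x'\<close> to \<open>z'\<close> (inside \<open>C'\<close>) gives a geodesic, because the four points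
  are in order.
\<close>

lemma l1dist_nonneg: "0 \<le> l1dist x y"
  unfolding l1dist_def by (simp add: sum_nonneg)

lemma l1dist_commute: "l1dist x y = l1dist y x"
  unfolding l1dist_def by (simp add: abs_minus_commute)

lemma l1dist_self [simp]: "l1dist x x = 0"
  unfolding l1dist_def by simp

lemma l1dist_eq_0_iff: "l1dist x y = 0 \<longleftrightarrow> x = y"
  unfolding l1dist_def by (subst sum_nonneg_eq_0_iff) (auto simp: vec_eq_iff)

definition l1_between :: "real^'n \<Rightarrow> real^'n \<Rightarrow> real^'n \<Rightarrow> bool" where
  "l1_between a b c \<longleftrightarrow> (\<forall>i. a$i \<le> b$i \<and> b$i \<le> c$i \<or> c$i \<le> b$i \<and> b$i \<le> a$i)"

lemma l1dist_add_eq_iff_between: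
  "l1dist a b + l1dist b c = l1dist a c \<longleftrightarrow> l1_between a b c"
proof
  assume "l1dist a b + l1dist b c = l1dist a c"
  hence "(\<Sum>i\<in>UNIV. \<bar>a$i - b$i\<bar> + \<bar>b$i - c$i\<bar> - \<bar>a$i - c$i\<bar>) = 0"
    unfolding l1dist_def by (simp add: sum.distrib sum_subtractf)
  hence *: "\<bar>a$i - b$i\<bar> + \<bar>b$i - c$i\<bar> - \<bar>a$i - c$i\<bar> = 0" for i
    by (subst (asm) sum_nonneg_eq_0_iff) auto
  show "l1_between a b c"
    unfolding l1_between_def
  proof
    fix i show "a$i \<le> b$i \<and> b$i \<le> c$i \<or> c$i \<le> b$i \<and> b$i \<le> a$i"
      using *[of i] by arith
  qed
next
  assume "l1_between a b c"
  hence "\<bar>a$i - b$i\<bar> + \<bar>b$i - c$i\<bar> = \<bar>a$i - c$i\<bar>" for i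
    unfolding l1_between_def by (cases "a$i \<le> c$i"; auto dest!: spec[of _ i])
  thus "l1dist a b + l1dist b c = l1dist a c"
    unfolding l1dist_def by (simp add: sum.distrib[symmetric])
qed

lemma l1_between_middle:
  assumes "l1_between a p b" "l1_between b q c" "l1_between a b c"
  shows "l1_between p b q"
  unfolding l1_between_def
proof
  fix i
  have "a$i \<le> p$i \<and> p$i \<le> b$i \<or> b$i \<le> p$i \<and> p$i \<le> a$i"
    "b$i \<le> q$i \<and> q$i \<le> c$i \<or> c$i \<le> q$i \<and> q$i \<le> b$i"
    "a$i \<le> b$i \<and> b$i \<le> c$i \<or> c$i \<le> b$i \<and> b$i \<le> a$i"
    using assms unfolding l1_between_def by blast+
  thus "p$i \<le> b$i \<and> b$i \<le> q$i \<or> q$i \<le> b$i \<and> b$i \<le> p$i" by linarith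
qed

definition l1_geodesic :: "(real^'n) set \<Rightarrow> (real \<Rightarrow> real^'n) \<Rightarrow> real^'n \<Rightarrow> real^'n \<Rightarrow> bool" where
  "l1_geodesic Z g a b \<longleftrightarrow> g 0 = a \<and> g (l1dist a b) = b \<and> (\<forall>t\<in>{0..l1dist a b}. g t \<in> Z) \<and>
     (\<forall>t\<in>{0..l1dist a b}. \<forall>t'\<in>{0..l1dist a b}. l1dist (g t) (g t') = \<bar>t - t'\<bar>)"

lemma l1_convex_iff_geodesic: "l1_convex Z \<longleftrightarrow> (\<forall>z\<in>Z. \<forall>z'\<in>Z. \<exists>g. l1_geodesic Z g z z')"
  unfolding l1_convex_def l1_geodesic_def by blast

lemma l1_geodesic_subset: "l1_geodesic S g a b \<Longrightarrow> S \<subseteq> Z \<Longrightarrow> l1_geodesic Z g a b"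
  unfolding l1_geodesic_def by blast

lemma l1_geodesic_between:
  assumes "l1_geodesic Z g a b" "0 \<le> s" "s \<le> t" "t \<le> u" "u \<le> l1dist a b"
  shows "l1_between (g s) (g t) (g u)"
proof -
  have "l1dist (g t) (g t') = \<bar>t - t'\<bar>" if "t \<in> {0..l1dist a b}" "t' \<in> {0..l1dist a b}" for t t'
    using assms(1) that unfolding l1_geodesic_def by blast
  with assms(2-) show ?thesis
    by (simp flip: l1dist_add_eq_iff_between)
qed

lemma l1_geodesic_join:
  assumes g1: "l1_geodesic Z g1 a b" and g2: "l1_geodesic Z g2 b c" and abc: "l1_between a b c"
  shows "\<exists>g. l1_geodesic Z g a c"
proof -
  define d1 where "d1 = l1dist a b"
  define d2 where "d2 = l1dist b c"
  have d: "l1dist a c = d1 + d2" "0 \<le> d1" "0 \<le> d2"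
    using abc by (simp_all add: d1_def d2_def l1dist_nonneg flip: l1dist_add_eq_iff_between)
  have G1: "g1 0 = a" "g1 d1 = b" "\<And>t. t\<in>{0..d1} \<Longrightarrow> g1 t \<in> Z"
    "\<And>t t'. t\<in>{0..d1} \<Longrightarrow> t'\<in>{0..d1} \<Longrightarrow> l1dist (g1 t) (g1 t') = \<bar>t - t'\<bar>"
    using g1 unfolding l1_geodesic_def d1_def by auto
  have G2: "g2 0 = b" "g2 d2 = c" "\<And>t. t\<in>{0..d2} \<Longrightarrow> g2 t \<in> Z"
    "\<And>t t'. t\<in>{0..d2} \<Longrightarrow> t'\<in>{0..d2} \<Longrightarrow> l1dist (g2 t) (g2 t') = \<bar>t - t'\<bar>"
    using g2 unfolding l1_geodesic_def d2_def by auto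
  have across: "l1dist (g1 t) (g2 s) = (d1 - t) + s"
    if "0 \<le> t" "t \<le> d1" "0 \<le> s" "s \<le> d2" for t s
  proof -
    have "l1_between a (g1 t) b" using l1_geodesic_between[OF g1, of 0 t d1] that G1 d1_def by simp
    moreover have "l1_between b (g2 s) c" using l1_geodesic_between[OF g2, of 0 s d2] that G2 d2_def by simp
    ultimately have "l1_between (g1 t) b (g2 s)" using l1_between_middle abc by blast
    hence "l1dist (g1 t) (g2 s) = l1dist (g1 t) (g1 d1) + l1dist (g2 0) (g2 s)"
      by (simp add: G1(2) G2(1) flip: l1dist_add_eq_iff_between)
    also have "\<dots> = (d1 - t) + s" using G1(4)[of t d1] G2(4)[of 0 s] that by simp
    finally show ?thesis .
  qed
  define g where "g t = (if t \<le> d1 then g1 t else g2 (t - d1))" for t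
  have "l1_geodesic Z g a c"
    unfolding l1_geodesic_def d(1)
  proof (intro conjI ballI)
    show "g 0 = a" using d G1 by (simp add: g_def)
    show "g (d1 + d2) = c"
      using d G1(2) G2 by (cases "d2 = 0") (auto simp: g_def d2_def l1dist_eq_0_iff)
    fix t t' assume t: "t \<in> {0..d1 + d2}" and t': "t' \<in> {0..d1 + d2}"
    show "g t \<in> Z" using t G1(3) G2(3) by (auto simp: g_def)
    show "l1dist (g t) (g t') = \<bar>t - t'\<bar>"
    proof (cases "t \<le> d1"; cases "t' \<le> d1")
      assume "t \<le> d1" "t' \<le> d1"
      thus ?thesis using t t' G1(4) by (simp add: g_def)
    next
      assume "\<not> t \<le> d1" "\<not> t' \<le> d1"
      thus ?thesis using t t' G2(4)[of "t - d1" "t' - d1"] by (simp add: g_def)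
    next
      assume "t \<le> d1" "\<not> t' \<le> d1"
      thus ?thesis using t t' across[of t "t' - d1"] by (simp add: g_def)
    next
      assume "\<not> t \<le> d1" "t' \<le> d1"
      thus ?thesis using t t' across[of t' "t - d1"] by (simp add: g_def l1dist_commute[of "g2 _"])
    qed
  qed
  thus ?thesis by blast
qed

lemma l1_geodesic_segment:
  assumes S: "convex S" and a: "a \<in> S" and b: "b \<in> S"
  shows "\<exists>g. l1_geodesic S g a b"
proof -
  define d where "d = l1dist a b"
  define g where "g t = (1 - t/d) *\<^sub>R a + (t/d) *\<^sub>R b" for t
  have d0: "0 \<le> d" using l1dist_nonneg d_def by simp
  have "l1dist (g t) (g t') = \<bar>t - t'\<bar>" if "d \<noteq> 0" for t t'
  proof -
    have "\<bar>g t $ i - g t' $ i\<bar> = (\<bar>t - t'\<bar> / d) * \<bar>a$i - b$i\<bar>" for i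
    proof -
      have "g t $ i - g t' $ i = ((t - t')/d) * (b$i - a$i)"
        by (simp add: g_def algebra_simps diff_divide_distrib)
      thus ?thesis using d0 by (simp add: abs_mult abs_minus_commute)
    qed
    hence "l1dist (g t) (g t') = (\<bar>t - t'\<bar> / d) * d"
      unfolding l1dist_def d_def by (simp add: sum_distrib_left)
    thus ?thesis using that by simp
  qed
  moreover have "a = b" if "d = 0" using that by (simp add: d_def l1dist_eq_0_iff)
  ultimately have "l1_geodesic S g a b"
    using d0 b unfolding l1_geodesic_def d_def[symmetric]
    by (auto simp: g_def divide_le_eq_1 intro!: convexD[OF S a b])
  thus ?thesis by blast
qed

lemma l1_geodesic_reparametrize:
  fixes p :: "real \<Rightarrow> real^'n"
  assumes "0 \<le> T"
    and inZ: "\<And>t. t \<in> {0..T} \<Longrightarrow> p t \<in> Z"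
    and lip: "\<And>t t'. t \<in> {0..T} \<Longrightarrow> t' \<in> {0..T} \<Longrightarrow> l1dist (p t) (p t') \<le> \<bar>t - t'\<bar>"
    and between: "\<And>t t'. 0 \<le> t \<Longrightarrow> t \<le> t' \<Longrightarrow> t' \<le> T \<Longrightarrow> l1_between (p 0) (p t) (p t')"
  shows "\<exists>g. l1_geodesic Z g (p 0) (p T)"
proof -
  define \<psi> where "\<psi> t = l1dist (p 0) (p t)" for t
  have arc: "l1dist (p t) (p t') = \<bar>\<psi> t - \<psi> t'\<bar>" if "t \<in> {0..T}" "t' \<in> {0..T}" for t t'
  proof -
    have incr: "l1dist (p t) (p t') = \<psi> t' - \<psi> t" if "0 \<le> t" "t \<le> t'" "t' \<le> T" for t t'
      using between[OF that] by (simp add: \<psi>_def flip: l1dist_add_eq_iff_between)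
    show ?thesis
    proof (cases "t \<le> t'")
      case True
      thus ?thesis using incr[of t t'] that l1dist_nonneg[of "p t" "p t'"] by auto
    next
      case False
      thus ?thesis using incr[of t' t] that l1dist_nonneg[of "p t'" "p t"] l1dist_commute[of "p t"]
        by auto
    qed
  qed
  have "1-lipschitz_on {0..T} \<psi>"
    using lip arc by (intro lipschitz_onI) (auto simp: dist_real_def)
  hence "continuous_on {0..T} \<psi>" by (rule lipschitz_on_continuous_on)
  moreover have "\<psi> 0 = 0" "\<psi> T = l1dist (p 0) (p T)" by (simp_all add: \<psi>_def)
  ultimately have "\<exists>t. 0 \<le> t \<and> t \<le> T \<and> \<psi> t = s" if "s \<in> {0..l1dist (p 0) (p T)}" for s
    using IVT'[of \<psi> 0 s T] \<open>0 \<le> T\<close> that by auto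
  then obtain \<tau> where \<tau>: "\<And>s. s \<in> {0..l1dist (p 0) (p T)} \<Longrightarrow> \<tau> s \<in> {0..T} \<and> \<psi> (\<tau> s) = s"
    by (metis atLeastAtMost_iff)
  have "l1_geodesic Z (p \<circ> \<tau>) (p 0) (p T)"
    unfolding l1_geodesic_def
  proof (intro conjI ballI)
    show "(p \<circ> \<tau>) 0 = p 0"
      using \<tau>[of 0] arc[of 0 "\<tau> 0"] l1dist_nonneg[of "p 0" "p T"] \<open>\<psi> 0 = 0\<close>
      by (simp add: l1dist_eq_0_iff)
    show "(p \<circ> \<tau>) (l1dist (p 0) (p T)) = p T"
      using \<tau>[of "l1dist (p 0) (p T)"] arc[of T "\<tau> (l1dist (p 0) (p T))"] \<open>0 \<le> T\<close>
        \<open>\<psi> T = l1dist (p 0) (p T)\<close> l1dist_nonneg[of "p 0" "p T"]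
      by (simp add: l1dist_eq_0_iff)
    fix s s' assume s: "s \<in> {0..l1dist (p 0) (p T)}" and s': "s' \<in> {0..l1dist (p 0) (p T)}"
    show "(p \<circ> \<tau>) s \<in> Z" using \<tau>[OF s] inZ by simp
    show "l1dist ((p \<circ> \<tau>) s) ((p \<circ> \<tau>) s') = \<bar>s - s'\<bar>"
      using arc[of "\<tau> s" "\<tau> s'"] \<tau>[OF s] \<tau>[OF s'] by simp
  qed
  thus ?thesis by blast
qed

definition grid_interval :: "real \<Rightarrow> int \<Rightarrow> real set" where
  "grid_interval lam k = {lam * of_int k .. lam * (of_int k + 1)}"

definition grid_cell :: "real \<Rightarrow> ('n \<Rightarrow> int) \<Rightarrow> (real^'n) set" where
  "grid_cell lam k = {y. \<forall>i. y$i \<in> grid_interval lam (k i)}"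

lemma convex_grid_cell: "convex (grid_cell lam k)"
  unfolding grid_cell_def by (rule convex_box_cart) (simp only: Collect_mem_eq grid_interval_def convex_real_interval)

lemma ex_grid_interval:
  assumes "lam > 0" shows "\<exists>k. u \<in> grid_interval lam k"
proof
  show "u \<in> grid_interval lam \<lfloor>u / lam\<rfloor>"
    using floor_divide_lower[OF assms, of u] floor_divide_upper[OF assms, of u]
    unfolding grid_interval_def by (auto simp: mult.commute)
qed

lemma scaled_cube_eq_grid_cell:
  assumes "lam > 0"
  shows "scaled_cube lam (\<chi> i. of_int (k i) + 1/2) = grid_cell lam k"
proof -
  have mem: "y \<in> scaled_cube lam h \<longleftrightarrow>
      (\<forall>i. -1/2 \<le> 1/lam * y$i - h$i \<and> 1/lam * y$i - h$i \<le> 1/2)" for y h :: "real^'n"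
  proof -
    have "y = lam *\<^sub>R (h + q) \<longleftrightarrow> q = (1/lam) *\<^sub>R y - h" for q
      using assms by (auto simp: vec_eq_iff field_simps)
    hence "y \<in> scaled_cube lam h \<longleftrightarrow> (1/lam) *\<^sub>R y - h \<in> unit_cube"
      unfolding scaled_cube_def image_iff by simp
    thus ?thesis
      unfolding unit_cube_def mem_Collect_eq
      by (simp only: vector_minus_component vector_scaleR_component real_scaleR_def)
  qed
  have coord: "-1/2 \<le> 1/lam * u - (of_int m + 1/2) \<and> 1/lam * u - (of_int m + 1/2) \<le> 1/2 \<longleftrightarrow>
      u \<in> grid_interval lam m" for u m
    using assms by (auto simp: grid_interval_def field_simps)
  show ?thesis
    unfolding set_eq_iff mem grid_cell_def mem_Collect_eq by (simp only: vec_lambda_beta coord simp_thms)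
qed

lemma cube_thickening_eq_grid_cells:
  assumes "lam > 0"
  shows "cube_thickening lam X = \<Union>{grid_cell lam k | k. grid_cell lam k \<inter> X \<noteq> {}}"
proof -
  have half: "(\<forall>i. h$i \<in> half_integers) \<longleftrightarrow> (\<exists>k. h = (\<chi> i. of_int (k i) + 1/2))" for h :: "real^'n"
  proof
    assume "\<forall>i. h$i \<in> half_integers"
    hence "\<forall>i. \<exists>m. h$i = of_int m + 1/2"
      unfolding half_integers_def by blast
    then obtain k where "\<And>i. h$i = of_int (k i) + 1/2"
      by metis
    thus "\<exists>k. h = (\<chi> i. of_int (k i) + 1/2)" by (auto simp: vec_eq_iff)
  qed (auto simp: half_integers_def)
  have "{scaled_cube lam h | h. (\<forall>i. h$i \<in> half_integers) \<and> scaled_cube lam h \<inter> X \<noteq> {}} =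
      {scaled_cube lam (\<chi> i. of_int (k i) + 1/2) | k.
         scaled_cube lam (\<chi> i. of_int (k i) + 1/2) \<inter> X \<noteq> {}}"
    unfolding half by blast
  also have "\<dots> = {grid_cell lam k | k. grid_cell lam k \<inter> X \<noteq> {}}"
    by (simp add: scaled_cube_eq_grid_cell[OF assms])
  finally show ?thesis
    unfolding cube_thickening_def by simp
qed

lemma grid_interval_le:
  assumes "lam > 0" "u \<in> grid_interval lam k" "v \<in> grid_interval lam m" "u < v"
  shows "k \<le> m"
proof -
  have "lam * of_int k < lam * (of_int m + 1)"
    using assms(2-) unfolding grid_interval_def by auto
  hence "of_int k < (of_int m + 1 :: real)" using assms(1) by simp
  thus ?thesis by linarith
qed

text \<open>
  In the crossing case, where \<open>xa, xb\<close> are ordered against \<open>za, zb\<close>, all four points lie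
  in one grid interval; clamping there would break the order of \<open>za\<close>, \<open>shadow xa\<close>,
  \<open>shadow xb\<close>, \<open>zb\<close>, so the map is constant instead.
\<close>
definition shadow :: "real \<Rightarrow> real \<Rightarrow> real \<Rightarrow> real \<Rightarrow> real \<Rightarrow> real" where
  "shadow za zb xa xb y =
     (if (xb - xa) * (zb - za) < 0 then za else max (min za zb) (min (max za zb) y))"

lemma shadow_mono: "u \<le> v \<Longrightarrow> shadow za zb xa xb u \<le> shadow za zb xa xb v"
  unfolding shadow_def by auto

lemma shadow_lipschitz: "\<bar>shadow za zb xa xb u - shadow za zb xa xb v\<bar> \<le> \<bar>u - v\<bar>"
  unfolding shadow_def min_def max_def by (auto simp: abs_le_iff)

lemma crossing_same_grid_interval:
  assumes lam: "lam > 0"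
    and "xa \<in> grid_interval lam ka" "za \<in> grid_interval lam ka"
    and "xb \<in> grid_interval lam kb" "zb \<in> grid_interval lam kb"
    and "(xb - xa) * (zb - za) < 0"
  shows "ka = kb"
proof -
  have "xb < xa \<and> za < zb \<or> xa < xb \<and> zb < za"
    using assms(6) by (auto simp: mult_less_0_iff)
  thus ?thesis
    using grid_interval_le[OF lam] assms(2-5) by (metis order.antisym)
qed

lemma shadow_grid_interval:
  assumes lam: "lam > 0"
    and a: "xa \<in> grid_interval lam ka" "za \<in> grid_interval lam ka"
    and b: "xb \<in> grid_interval lam kb" "zb \<in> grid_interval lam kb"
    and y: "min xa xb \<le> y" "y \<le> max xa xb"
  shows "\<exists>k. y \<in> grid_interval lam k \<and> shadow za zb xa xb y \<in> grid_interval lam k"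
proof (cases "(xb - xa) * (zb - za) < 0")
  case True
  hence "ka = kb" using crossing_same_grid_interval[OF lam a b] by simp
  hence "y \<in> grid_interval lam ka \<and> shadow za zb xa xb y \<in> grid_interval lam ka"
    using True a b y by (auto simp: shadow_def grid_interval_def)
  thus ?thesis by blast
next
  case False
  hence shadow: "shadow za zb xa xb y = max (min za zb) (min (max za zb) y)"
    by (simp add: shadow_def)
  consider "min za zb \<le> y \<and> y \<le> max za zb" | "y < min za zb" | "max za zb < y" by linarith
  thus ?thesis
  proof cases
    case 1
    thus ?thesis using shadow ex_grid_interval[OF lam, of y] by auto
  next
    case 2
    thus ?thesis using shadow a b y
      by (intro exI[of _ "if xa \<le> xb then ka else kb"]) (auto simp: grid_interval_def)
  next
    case 3
    thus ?thesis using shadow a b y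
      by (intro exI[of _ "if xa \<le> xb then kb else ka"]) (auto simp: grid_interval_def)
  qed
qed

lemma shadow_left_grid_interval:
  assumes "xa \<in> grid_interval lam ka" "za \<in> grid_interval lam ka"
  shows "shadow za zb xa xb xa \<in> grid_interval lam ka"
  using assms unfolding shadow_def grid_interval_def by auto

lemma shadow_right_grid_interval:
  assumes lam: "lam > 0"
    and a: "xa \<in> grid_interval lam ka" "za \<in> grid_interval lam ka"
    and b: "xb \<in> grid_interval lam kb" "zb \<in> grid_interval lam kb"
  shows "shadow za zb xa xb xb \<in> grid_interval lam kb"
proof (cases "(xb - xa) * (zb - za) < 0")
  case True
  hence "ka = kb" using crossing_same_grid_interval[OF lam a b] by simp
  thus ?thesis using True a by (simp add: shadow_def)
next
  case False
  thus ?thesis using b unfolding shadow_def grid_interval_def by auto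
qed

lemma shadow_endpoints_ordered:
  fixes za zb xa xb :: real
  defines "wa \<equiv> shadow za zb xa xb xa" and "wb \<equiv> shadow za zb xa xb xb"
  shows "za \<le> wa \<and> wa \<le> wb \<and> wb \<le> zb \<or> zb \<le> wb \<and> wb \<le> wa \<and> wa \<le> za"
proof (cases "(xb - xa) * (zb - za) < 0")
  case True
  thus ?thesis by (auto simp: wa_def wb_def shadow_def)
next
  case False
  hence "xa \<le> xb \<and> za \<le> zb \<or> xb \<le> xa \<and> zb \<le> za \<or> za = zb"
    by (auto simp: mult_less_0_iff not_less)
  thus ?thesis using False unfolding wa_def wb_def shadow_def by auto
qed

definition shadow_map :: "real^'n \<Rightarrow> real^'n \<Rightarrow> real^'n \<Rightarrow> real^'n \<Rightarrow> real^'n \<Rightarrow> real^'n" where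
  "shadow_map z z' x x' y = (\<chi> i. shadow (z$i) (z'$i) (x$i) (x'$i) (y$i))"

lemma l1dist_shadow_map_le: "l1dist (shadow_map z z' x x' y) (shadow_map z z' x x' y') \<le> l1dist y y'"
  unfolding l1dist_def shadow_map_def by (intro sum_mono) (simp add: shadow_lipschitz)

lemma l1_between_shadow_map:
  assumes "l1_between a b c"
  shows "l1_between (shadow_map z z' x x' a) (shadow_map z z' x x' b) (shadow_map z z' x x' c)"
  using assms unfolding l1_between_def shadow_map_def by (auto intro: shadow_mono)

lemma shadow_map_endpoints_between:
  "l1_between z (shadow_map z z' x x' x) z'"
  "l1_between (shadow_map z z' x x' x) (shadow_map z z' x x' x') z'"
  unfolding l1_between_def shadow_map_def vec_lambda_beta using shadow_endpoints_ordered by (meson order_trans)+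

lemma grid_cell_subset_cube_thickening:
  assumes "lam > 0" "x \<in> grid_cell lam k" "x \<in> X"
  shows "grid_cell lam k \<subseteq> cube_thickening lam X"
  using assms unfolding cube_thickening_eq_grid_cells[OF assms(1)] by blast

lemma shadow_map_left_grid_cell:
  assumes "x \<in> grid_cell lam k" "z \<in> grid_cell lam k"
  shows "shadow_map z z' x x' x \<in> grid_cell lam k"
  using assms shadow_left_grid_interval unfolding grid_cell_def shadow_map_def by simp

lemma shadow_map_right_grid_cell:
  assumes "lam > 0" "x \<in> grid_cell lam k" "z \<in> grid_cell lam k"
    "x' \<in> grid_cell lam k'" "z' \<in> grid_cell lam k'"
  shows "shadow_map z z' x x' x' \<in> grid_cell lam k'"
  using assms unfolding grid_cell_def shadow_map_def by (auto intro: shadow_right_grid_interval)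

lemma shadow_map_mem_cube_thickening:
  assumes lam: "lam > 0" and "x \<in> grid_cell lam k" "z \<in> grid_cell lam k"
    "x' \<in> grid_cell lam k'" "z' \<in> grid_cell lam k'"
    and "l1_between x y x'" "y \<in> X"
  shows "shadow_map z z' x x' y \<in> cube_thickening lam X"
proof -
  have "\<forall>i. \<exists>m. y$i \<in> grid_interval lam m \<and> shadow_map z z' x x' y $ i \<in> grid_interval lam m"
  proof
    fix i
    have "x$i \<in> grid_interval lam (k i)" "z$i \<in> grid_interval lam (k i)"
      "x'$i \<in> grid_interval lam (k' i)" "z'$i \<in> grid_interval lam (k' i)"
      using assms(2-5) unfolding grid_cell_def by auto
    moreover have "min (x$i) (x'$i) \<le> y$i" "y$i \<le> max (x$i) (x'$i)"
      using assms(6) unfolding l1_between_def by (auto dest: spec[of _ i])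
    ultimately have "\<exists>m. y$i \<in> grid_interval lam m \<and>
        shadow (z$i) (z'$i) (x$i) (x'$i) (y$i) \<in> grid_interval lam m"
      by (rule shadow_grid_interval[OF lam])
    thus "\<exists>m. y$i \<in> grid_interval lam m \<and> shadow_map z z' x x' y $ i \<in> grid_interval lam m"
      by (simp add: shadow_map_def)
  qed
  then obtain m where "\<forall>i. y$i \<in> grid_interval lam (m i) \<and> shadow_map z z' x x' y $ i \<in> grid_interval lam (m i)"
    by (rule choice[THEN exE])
  hence "y \<in> grid_cell lam m" "shadow_map z z' x x' y \<in> grid_cell lam m"
    unfolding grid_cell_def by auto
  thus ?thesis using grid_cell_subset_cube_thickening[OF lam _ \<open>y \<in> X\<close>] by blast
qed

lemma l1_geodesic_shadow_map:
  assumes lam: "lam > 0" and \<gamma>: "l1_geodesic X \<gamma> x x'"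
    and cells: "x \<in> grid_cell lam k" "z \<in> grid_cell lam k" "x' \<in> grid_cell lam k'" "z' \<in> grid_cell lam k'"
  shows "\<exists>g. l1_geodesic (cube_thickening lam X) g (shadow_map z z' x x' x) (shadow_map z z' x x' x')"
proof -
  define D where "D = l1dist x x'"
  have ends: "\<gamma> 0 = x" "\<gamma> D = x'"
    and dist: "\<And>t t'. t \<in> {0..D} \<Longrightarrow> t' \<in> {0..D} \<Longrightarrow> l1dist (\<gamma> t) (\<gamma> t') = \<bar>t - t'\<bar>"
    and inX: "\<And>t. t \<in> {0..D} \<Longrightarrow> \<gamma> t \<in> X"
    using \<gamma> unfolding l1_geodesic_def D_def by auto
  have between: "l1_between (\<gamma> s) (\<gamma> t) (\<gamma> u)" if "0 \<le> s" "s \<le> t" "t \<le> u" "u \<le> D" for s t u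
    using l1_geodesic_between[OF \<gamma>] that D_def by blast
  let ?p = "\<lambda>t. shadow_map z z' x x' (\<gamma> t)"
  have "\<exists>g. l1_geodesic (cube_thickening lam X) g (?p 0) (?p D)"
  proof (rule l1_geodesic_reparametrize)
    show "0 \<le> D" by (simp add: D_def l1dist_nonneg)
    fix t t' assume t: "t \<in> {0..D}" and t': "t' \<in> {0..D}"
    show "?p t \<in> cube_thickening lam X"
      using between[of 0 t D] ends t inX[OF t]
      by (intro shadow_map_mem_cube_thickening[OF lam cells]) auto
    show "l1dist (?p t) (?p t') \<le> \<bar>t - t'\<bar>"
      using l1dist_shadow_map_le[of z z' x x' "\<gamma> t" "\<gamma> t'"] dist[OF t t'] by simp
  next
    fix t t' assume "0 \<le> t" "t \<le> t'" "t' \<le> D"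
    thus "l1_between (?p 0) (?p t) (?p t')" by (intro l1_between_shadow_map between) auto
  qed
  thus ?thesis using ends by simp
qed

theorem proposition3p1:
  fixes X :: "(real^'n) set" and lam :: real
  assumes "l1_convex X" and "lam > 0"
  shows "l1_convex (cube_thickening lam X)"
  unfolding l1_convex_iff_geodesic
proof (intro ballI)
  let ?Y = "cube_thickening lam X"
  fix z z' assume "z \<in> ?Y" "z' \<in> ?Y"
  then obtain k x k' x' where x: "x \<in> X" "x \<in> grid_cell lam k" "z \<in> grid_cell lam k"
    and x': "x' \<in> X" "x' \<in> grid_cell lam k'" "z' \<in> grid_cell lam k'"
    unfolding cube_thickening_eq_grid_cells[OF \<open>lam > 0\<close>] by blast
  obtain \<gamma> where "l1_geodesic X \<gamma> x x'"
    using \<open>l1_convex X\<close> x(1) x'(1) unfolding l1_convex_iff_geodesic by blast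
  let ?w = "shadow_map z z' x x' x" and ?w' = "shadow_map z z' x x' x'"
  obtain g2 where g2: "l1_geodesic ?Y g2 ?w ?w'"
    using l1_geodesic_shadow_map[OF \<open>lam > 0\<close> \<open>l1_geodesic X \<gamma> x x'\<close> x(2,3) x'(2,3)] by blast
  have "?w \<in> grid_cell lam k" "?w' \<in> grid_cell lam k'"
    using shadow_map_left_grid_cell[OF x(2,3)] shadow_map_right_grid_cell[OF \<open>lam > 0\<close> x(2,3) x'(2,3)]
    by auto
  moreover have "grid_cell lam k \<subseteq> ?Y" "grid_cell lam k' \<subseteq> ?Y"
    using grid_cell_subset_cube_thickening \<open>lam > 0\<close> x x' by blast+
  ultimately obtain g1 g3 where g1: "l1_geodesic ?Y g1 z ?w" and g3: "l1_geodesic ?Y g3 ?w' z'"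
    using l1_geodesic_segment[OF convex_grid_cell] x(3) x'(3) l1_geodesic_subset by meson
  obtain g23 where "l1_geodesic ?Y g23 ?w z'"
    using l1_geodesic_join[OF g2 g3 shadow_map_endpoints_between(2)] by blast
  thus "\<exists>g. l1_geodesic ?Y g z z'"
    using l1_geodesic_join[OF g1 _ shadow_map_endpoints_between(1)] by blast
qed

end
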